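(* Let $c \in (0,1/2]$, $t_1 \in [0,1-2c]$, $t_2 \in [t_1+c,1-c]$, and $p,q \in (0,1)$ with $p\neq q$. Define $\Phi_1:\mathbb{R}\to\mathbb{R}\cup\{\infty\}$ by \[ \Phi_1(r) = \frac{t_2-t_1}{1-c}\,\frac{c(p-q)^2+(1-c)(p+q-2r)}{(1-c)+c(p+q-2r)}. \] Then: (1) $\Phi_1$ is a rational function of $r$ with one simple pole at $\frac{p+q}{2}+\frac{1-c}{2c}$, which lies strictly to the right of the interval $\Lambda_{p,q}$; (2) $\Phi_1$ has one root, at $\frac{p+q}{2}+\frac{c(p-q)^2}{2(1-c)}$, which lies strictly to the right of $\Lambda_{p,q}$ and strictly to the left of the pole; (3) $\Phi_1$ is differentiable at every $r\in\mathbb{R}$ other than the pole, with \[ \Phi_1'(r) = 2(t_2-t_1)\frac{c^2(p-q)^2-(1-c)^2}{(1-c)\big(1-c+c(p+q-2r)\big)^2} < 0, \] so $\Phi_1$ is strictly decreasing on $\Lambda_{p,q}$; (4) $\Phi_1$ is strictly positive on $\Lambda_{p,q}$.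
   Context: $\Lambda_{p,q}$ denotes the open interval $\{r\in\mathbb{R}: \max\{0,p+q-1\}<r<\min\{p,q\}\}$. *)

theory Defs
  imports "HOL-Analysis.Analysis"
begin

definition Lambda :: "real \<Rightarrow> real \<Rightarrow> real set" where
  "Lambda p q = {max 0 (p + q - 1) <..< min p q}"

text \<open>Phi_1 as a real function; at the pole (denominator 0) HOL division yields 0,
  which stands in for the value infinity of the paper.\<close>
definition Phi1 :: "real \<Rightarrow> real \<Rightarrow> real \<Rightarrow> real \<Rightarrow> real \<Rightarrow> real \<Rightarrow> real" where
  "Phi1 c t1 t2 p q r =
     (t2 - t1) / (1 - c) * ((c * (p - q)^2 + (1 - c) * (p + q - 2 * r)) /
                            ((1 - c) + c * (p + q - 2 * r)))"

end

theory Submission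
  imports Defs
begin

text \<open>Dividing out 2(1-c) from the numerator and 2c from the denominator, \<open>Phi1\<close> is the
  Moebius function \<open>r \<mapsto> K (z - r) / (r0 - r)\<close> with \<open>K = (t2 - t1) / c > 0\<close>, root \<open>z\<close> and
  pole \<open>r0\<close>. Since \<open>Lambda p q\<close> lies below \<open>min p q < (p + q) / 2 \<le> z\<close>, everything reduces to
  \<open>z < r0\<close>, i.e. \<open>c |p - q| < 1 - c\<close>, which holds as \<open>|p - q| < 1\<close> and \<open>c \<le> 1/2\<close>; the same
  inequality makes the numerator \<open>c\<^sup>2 (p - q)\<^sup>2 - (1 - c)\<^sup>2\<close> of the derivative negative.\<close>

definition Phi1_pole :: "real \<Rightarrow> real \<Rightarrow> real \<Rightarrow> real" where
  "Phi1_pole c p q = (p + q) / 2 + (1 - c) / (2 * c)"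

definition Phi1_root :: "real \<Rightarrow> real \<Rightarrow> real \<Rightarrow> real" where
  "Phi1_root c p q = (p + q) / 2 + c * (p - q)^2 / (2 * (1 - c))"

lemma Phi1_denominator_eq:
  assumes "c \<noteq> 0"
  shows "(1 - c) + c * (p + q - 2 * r) = 2 * c * (Phi1_pole c p q - r)"
  using assms by (simp add: Phi1_pole_def field_simps)

lemma Phi1_numerator_eq:
  assumes "c \<noteq> 1"
  shows "c * (p - q)^2 + (1 - c) * (p + q - 2 * r) = 2 * (1 - c) * (Phi1_root c p q - r)"
  using assms by (simp add: Phi1_root_def field_simps)

lemma Phi1_factored:
  assumes "c \<noteq> 0" "c \<noteq> 1"
  shows "Phi1 c t1 t2 p q r = (t2 - t1) / c * (Phi1_root c p q - r) / (Phi1_pole c p q - r)"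
proof -
  have cancel: "a / b * (2 * b * X / (2 * c * Y)) = a / c * X / Y"
    if "b \<noteq> 0" for a b X Y :: real
    using that \<open>c \<noteq> 0\<close> by (simp add: mult_ac)
  have "Phi1 c t1 t2 p q r = (t2 - t1) / (1 - c) * (2 * (1 - c) * (Phi1_root c p q - r) /
                               (2 * c * (Phi1_pole c p q - r)))"
    using assms by (simp add: Phi1_def Phi1_denominator_eq Phi1_numerator_eq)
  also have "\<dots> = (t2 - t1) / c * (Phi1_root c p q - r) / (Phi1_pole c p q - r)"
    using assms by (intro cancel) simp
  finally show ?thesis .
qed

lemma Phi1_has_real_derivative:
  fixes c t1 t2 p q r :: real
  defines "N \<equiv> \<lambda>r. c * (p - q)^2 + (1 - c) * (p + q - 2 * r)"
    and "D \<equiv> \<lambda>r. (1 - c) + c * (p + q - 2 * r)"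
    and "S \<equiv> c^2 * (p - q)^2 - (1 - c)^2"
  assumes "D r \<noteq> 0"
  shows "(Phi1 c t1 t2 p q has_real_derivative
           2 * (t2 - t1) * (c^2 * (p - q)^2 - (1 - c)^2) /
             ((1 - c) * (1 - c + c * (p + q - 2 * r))^2)) (at r)"
proof -
  have Phi1_eq: "Phi1 c t1 t2 p q = (\<lambda>r. (t2 - t1) / (1 - c) * (N r / D r))"
    by (simp add: Phi1_def N_def D_def fun_eq_iff)
  have "(N has_real_derivative - 2 * (1 - c)) (at r)" "(D has_real_derivative - 2 * c) (at r)"
    unfolding N_def D_def by (auto intro!: derivative_eq_intros)
  then have "(Phi1 c t1 t2 p q has_real_derivative
      (t2 - t1) / (1 - c) * ((- 2 * (1 - c) * D r - N r * (- 2 * c)) / (D r * D r))) (at r)"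
    unfolding Phi1_eq using assms by (intro DERIV_cmult DERIV_divide) auto
  moreover have "- 2 * (1 - c) * D r - N r * (- 2 * c) = 2 * S"
    unfolding N_def D_def S_def by (simp add: algebra_simps power2_eq_square)
  moreover have "(t2 - t1) / (1 - c) * (2 * S / (D r * D r)) = 2 * (t2 - t1) * S / ((1 - c) * (D r)^2)"
    by (simp add: power2_eq_square mult_ac)
  ultimately show ?thesis
    by (simp only: S_def D_def)
qed

lemma tendsto_mult_linear_fraction_at_pole:
  fixes K a b :: real
  shows "((\<lambda>r. (r - a) * (K * (b - r) / (a - r))) \<longlongrightarrow> K * (a - b)) (at a)"
proof -
  have "((\<lambda>r. K * (r - b)) \<longlongrightarrow> K * (a - b)) (at a)"
    by (intro tendsto_intros)
  moreover have "\<forall>\<^sub>F r in at a. K * (r - b) = (r - a) * (K * (b - r) / (a - r))"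
    by (auto simp: eventually_at_filter field_simps)
  ultimately show ?thesis
    by (rule Lim_transform_eventually)
qed

lemma square_mult_less_square_one_minus:
  fixes c d :: real
  assumes "0 < c" "c \<le> 1/2" "\<bar>d\<bar> < 1"
  shows "c^2 * d^2 < (1 - c)^2"
proof -
  have "c * \<bar>d\<bar> < c" using assms by simp
  also have "\<dots> \<le> 1 - c" using assms by simp
  finally have "(c * \<bar>d\<bar>)^2 < (1 - c)^2"
    using assms by (intro power_strict_mono) auto
  then show ?thesis
    by (simp add: power_mult_distrib)
qed

lemma Phi1_root_less_pole:
  assumes "0 < c" "c \<le> 1/2" "\<bar>p - q\<bar> < 1"
  shows "Phi1_root c p q < Phi1_pole c p q"
proof -
  have "c * (c * (p - q)^2) < (1 - c) * (1 - c)"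
    using square_mult_less_square_one_minus[OF assms] by (simp add: power2_eq_square)
  then have "c * (p - q)^2 / (2 * (1 - c)) < (1 - c) / (2 * c)"
    using assms by (simp add: field_simps)
  then show ?thesis
    by (simp add: Phi1_root_def Phi1_pole_def)
qed

lemma Phi1_derivative_neg:
  fixes c p q r t1 t2 :: real
  assumes "0 < c" "c \<le> 1/2" "\<bar>p - q\<bar> < 1" "t1 < t2"
    and "(1 - c) + c * (p + q - 2 * r) \<noteq> 0"
  shows "2 * (t2 - t1) * (c^2 * (p - q)^2 - (1 - c)^2) /
           ((1 - c) * (1 - c + c * (p + q - 2 * r))^2) < 0"
proof -
  have "2 * (t2 - t1) * (c^2 * (p - q)^2 - (1 - c)^2) < 0"
    using square_mult_less_square_one_minus[of c "p - q"] assms by (simp add: mult_pos_neg)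
  moreover have "0 < (1 - c) * (1 - c + c * (p + q - 2 * r))^2"
    using assms by simp
  ultimately show ?thesis
    by (rule divide_neg_pos)
qed

lemma min_less_Phi1_root:
  assumes "0 \<le> c" "c < 1" "p \<noteq> q"
  shows "min p q < Phi1_root c p q"
proof -
  have "min p q < (p + q) / 2" using assms by (auto simp: min_def)
  moreover have "0 \<le> c * (p - q)^2 / (2 * (1 - c))" using assms by simp
  ultimately show ?thesis unfolding Phi1_root_def by linarith
qed

lemma Phi1_denominator_zero_iff:
  assumes "c \<noteq> 0"
  shows "{r. (1 - c) + c * (p + q - 2 * r) = 0} = {Phi1_pole c p q}"
  using assms by (auto simp: Phi1_denominator_eq)

lemma Phi1_zeros:
  assumes "c \<noteq> 0" "c \<noteq> 1" "t1 \<noteq> t2" "Phi1_root c p q \<noteq> Phi1_pole c p q"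
  shows "{r. r \<noteq> Phi1_pole c p q \<and> Phi1 c t1 t2 p q r = 0} = {Phi1_root c p q}"
  using assms by (auto simp: Phi1_factored)

lemma Phi1_tendsto_at_pole:
  assumes "c \<noteq> 0" "c \<noteq> 1"
  shows "((\<lambda>r. (r - Phi1_pole c p q) * Phi1 c t1 t2 p q r) \<longlongrightarrow>
           (t2 - t1) / c * (Phi1_pole c p q - Phi1_root c p q)) (at (Phi1_pole c p q))"
  using tendsto_mult_linear_fraction_at_pole[of "Phi1_pole c p q" "(t2 - t1) / c" "Phi1_root c p q"]
  by (simp add: Phi1_factored[OF assms])

lemma Phi1_pos_below_root:
  assumes "0 < c" "c \<le> 1/2" "\<bar>p - q\<bar> < 1" "t1 < t2" "r < Phi1_root c p q"
  shows "0 < Phi1 c t1 t2 p q r"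
proof -
  have "r < Phi1_pole c p q"
    using Phi1_root_less_pole[of c p q] assms by simp
  then show ?thesis
    using assms by (simp add: Phi1_factored)
qed

lemma Phi1_strict_antimono_below_pole:
  assumes "0 < c" "c \<le> 1/2" "\<bar>p - q\<bar> < 1" "t1 < t2" "x < y" "y < Phi1_pole c p q"
  shows "Phi1 c t1 t2 p q y < Phi1 c t1 t2 p q x"
  using \<open>x < y\<close>
proof (rule DERIV_neg_imp_decreasing)
  fix r assume "r \<le> y"
  then have "(1 - c) + c * (p + q - 2 * r) \<noteq> 0"
    using assms by (simp add: Phi1_denominator_eq)
  then show "\<exists>D. (Phi1 c t1 t2 p q has_real_derivative D) (at r) \<and> D < 0"
    using Phi1_has_real_derivative Phi1_derivative_neg assms by blast
qed

lemma Lambda_less_min: "r \<in> Lambda p q \<Longrightarrow> r < min p q"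
  by (simp add: Lambda_def)

theorem proposition2p2:
  fixes c t1 t2 p q :: real
  assumes "0 < c" "c \<le> 1/2"
    and "0 \<le> t1" "t1 \<le> 1 - 2 * c"
    and "t1 + c \<le> t2" "t2 \<le> 1 - c"
    and "0 < p" "p < 1" "0 < q" "q < 1" "p \<noteq> q"
  shows
    "let r0 = (p + q) / 2 + (1 - c) / (2 * c);
         z = (p + q) / 2 + c * (p - q)^2 / (2 * (1 - c));
         f = Phi1 c t1 t2 p q
     in
       {r. (1 - c) + c * (p + q - 2 * r) = 0} = {r0}
     \<and> (\<exists>L. L \<noteq> 0 \<and> ((\<lambda>r. (r - r0) * f r) \<longlongrightarrow> L) (at r0))
     \<and> min p q < r0
     \<and> {r. r \<noteq> r0 \<and> f r = 0} = {z}
     \<and> min p q < z \<and> z < r0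
     \<and> (\<forall>r. r \<noteq> r0 \<longrightarrow>
          (f has_real_derivative
             2 * (t2 - t1) * (c^2 * (p - q)^2 - (1 - c)^2) /
               ((1 - c) * (1 - c + c * (p + q - 2 * r))^2)) (at r)
          \<and> 2 * (t2 - t1) * (c^2 * (p - q)^2 - (1 - c)^2) /
               ((1 - c) * (1 - c + c * (p + q - 2 * r))^2) < 0)
     \<and> (\<forall>x\<in>Lambda p q. \<forall>y\<in>Lambda p q. x < y \<longrightarrow> f y < f x)
     \<and> (\<forall>r\<in>Lambda p q. 0 < f r)"
proof -
  have hyps: "0 < c" "c \<le> 1/2" "\<bar>p - q\<bar> < 1" "t1 < t2" and "c \<noteq> 0" "c \<noteq> 1"
    using assms by auto
  let ?r0 = "Phi1_pole c p q" and ?z = "Phi1_root c p q"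
  have "min p q < ?z" "?z < ?r0"
    using min_less_Phi1_root Phi1_root_less_pole hyps assms by auto
  then have Lambda_below: "r < ?z" "r < ?r0" if "r \<in> Lambda p q" for r
    using Lambda_less_min[OF that] by linarith+
  have "(1 - c) + c * (p + q - 2 * r) \<noteq> 0" if "r \<noteq> ?r0" for r
    using that \<open>c \<noteq> 0\<close> by (simp add: Phi1_denominator_eq)
  then show ?thesis
    unfolding Let_def Phi1_pole_def[symmetric] Phi1_root_def[symmetric]
    using Phi1_denominator_zero_iff Phi1_tendsto_at_pole Phi1_zeros
      Phi1_has_real_derivative Phi1_derivative_neg[OF hyps(1-4)]
      Phi1_strict_antimono_below_pole[OF hyps] Phi1_pos_below_root[OF hyps]
      Lambda_below \<open>min p q < ?z\<close> \<open>?z < ?r0\<close> hyps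
    by (auto intro!: exI[of _ "(t2 - t1) / c * (?r0 - ?z)"])
qed

end
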